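(* Let $(\zeta_i)_{i\in\mathbb{Z}}$ be i.i.d. $\mathbb{Z}^2$-valued random vectors, realized as coordinates on $(\Omega,\mathbb{P})=((\mathbb{Z}^2)^{\mathbb{Z}},\text{product measure})$ with shift $\theta$, centered, aperiodic (support generates $\mathbb{Z}^2$), with finite second moment and nonsingular covariance; let $Z_0=\underline0$, $Z_n=\zeta_0+\dots+\zeta_{n-1}$. For intervals $I,J\subset\mathbb{N}$ and $\underline p\in\mathbb{Z}^2$ let $V(\omega,I,J,\underline p)=\#\{(u,v)\in I\times J: Z_u(\omega)-Z_v(\omega)=\underline p\}$ and $V(\omega,I,\underline p)=V(\omega,I,I,\underline p)$. Let $C_0>0$ be the constant such that $\mathbb{E}\,\#\{0\le u,v<n:Z_u=Z_v\}\sim C_0 n\ln n$. Then there is a set $\hat\Omega\subset\Omega$ with $\mathbb{P}(\hat\Omega)=1$ such that for all $\omega\in\hat\Omega$, all $\underline p\in\mathbb{Z}^2$ and all $A\in\,]0,1[$, with $B=1-A$ (and $nA$ standing for $\lfloor nA\rfloor$): $$\lim_n\frac{V(\omega,[nA,n],\underline p)}{C_0\,nB\ln n}=1,$$ and $$V(\omega,[1,nA],[nA,n],\underline p)+V(\omega,[nA,n],[1,nA],\underline p)=\varepsilon_n(\omega)\,n\log n\quad\text{with }\varepsilon_n(\omega)\to0.$$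
   Context: It is known (and used as input) that for a.e. $\omega$, $V(\omega,[1,n],\underline p)/(C_0n\ln n)\to1$ for every $\underline p\in\mathbb{Z}^2$, and $\#\{0\le u,v<n:Z_u(\omega)=Z_v(\omega)\}/(C_0n\ln n)\to1$. *)

theory Defs
  imports "HOL-Probability.Probability" "HOL-Library.Product_Plus" "HOL-Library.Landau_Symbols"
begin

inductive_set int_group_gen :: "(int \<times> int) set \<Rightarrow> (int \<times> int) set" for S where
  gen_zero: "(0, 0) \<in> int_group_gen S"
| gen_base: "x \<in> S \<Longrightarrow> x \<in> int_group_gen S"
| gen_add: "x \<in> int_group_gen S \<Longrightarrow> y \<in> int_group_gen S \<Longrightarrow> x + y \<in> int_group_gen S"
| gen_neg: "x \<in> int_group_gen S \<Longrightarrow> - x \<in> int_group_gen S"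

definition walk_space :: "(int \<times> int) pmf \<Rightarrow> (int \<Rightarrow> int \<times> int) measure" where
  "walk_space \<mu> = PiM UNIV (\<lambda>_::int. measure_pmf \<mu>)"

definition Zw :: "(int \<Rightarrow> int \<times> int) \<Rightarrow> nat \<Rightarrow> int \<times> int" where
  "Zw \<omega> n = (\<Sum>i<n. \<omega> (int i))"

definition Vw :: "(int \<Rightarrow> int \<times> int) \<Rightarrow> nat set \<Rightarrow> nat set \<Rightarrow> int \<times> int \<Rightarrow> nat" where
  "Vw \<omega> I J p = card {(u, v). u \<in> I \<and> v \<in> J \<and> Zw \<omega> u - Zw \<omega> v = p}"

definition self_int :: "(int \<Rightarrow> int \<times> int) \<Rightarrow> nat \<Rightarrow> nat" where
  "self_int \<omega> n = card {(u, v). u < n \<and> v < n \<and> Zw \<omega> u = Zw \<omega> v}"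

end

theory Submission
  imports Defs "HOL-Real_Asymp.Real_Asymp"
begin

text \<open>
  Write \<open>m = \<lfloor>nA\<rfloor>\<close> and split \<open>[1,n]\<close> at \<open>m\<close>: \<open>V([1,n]) = V([1,m)) + V([m,n])\<close> plus the cross
  terms. Normalised by \<open>C0 n ln n\<close>, the left side tends to \<open>1\<close> and the first term to \<open>A\<close>, by the
  almost sure asymptotics of \<open>V\<close> on initial segments. Hence \<open>V([m,n])\<close> tends to \<open>1 - A\<close> and the
  cross terms to \<open>0\<close> as soon as \<open>V([m,n]) \<ge> (1 - e) (1 - A) C0 n ln n\<close> eventually, for every \<open>e > 0\<close>.

  For this lower bound cut \<open>(m,n]\<close> into \<open>K \<approx> (ln n)\<^sup>2\<close> consecutive blocks of length \<open>L\<close>. The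
  coordinates are independent and shift invariant, so the normalised block counts, truncated at \<open>1\<close>,
  are i.i.d. with mean tending to \<open>1\<close>. Hoeffding's inequality bounds the probability that their
  average falls below \<open>1 - e\<close> by \<open>exp(-2 K e\<^sup>2)\<close>, which is summable in \<open>n\<close>, so by Borel--Cantelli
  the average is eventually close to \<open>1\<close> almost surely. As \<open>V([m,n])\<close> dominates the sum of the
  block counts and \<open>K L ln L \<sim> (1 - A) n ln n\<close>, this is the lower bound. By monotonicity in \<open>A\<close>,
  countably many rational \<open>A\<close> and \<open>e\<close> suffice for the exceptional null set.

  The distributional hypotheses on the steps enter only through the assumed asymptotics of \<open>V\<close>
  on initial segments.
\<close>

lemma ln_of_nat_nonneg: "0 \<le> ln (real n)"
  by (cases "n = 0") auto

lemma nat_floor_gt: "x - 1 < real (nat \<lfloor>x\<rfloor>)"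
proof (cases "0 \<le> x")
  case True
  then show ?thesis using real_of_int_floor_gt_diff_one[of x] by simp
qed simp

lemma x_ln_x_mono: "1 \<le> x \<Longrightarrow> x \<le> y \<Longrightarrow> x * ln x \<le> y * ln (y::real)"
  by (intro mult_mono) auto

lemma tendsto_parts_of_sum:
  fixes c x :: "nat \<Rightarrow> real"
  assumes sum: "(\<lambda>n. c n + x n) \<longlonglongrightarrow> l" and l: "0 < l"
    and x_nonneg: "\<forall>\<^sub>F n in sequentially. 0 \<le> x n"
    and lower: "\<And>e. 0 < e \<Longrightarrow> e < 1 \<Longrightarrow> \<forall>\<^sub>F n in sequentially. (1 - e) * l \<le> c n"
  shows "c \<longlonglongrightarrow> l" and "x \<longlonglongrightarrow> 0"
proof -
  show c_lim: "c \<longlonglongrightarrow> l"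
  proof (rule order_tendstoI)
    fix y assume "y < l"
    define e where "e = min (1/2) ((l - y) / (2 * l))"
    have "0 < e" "e < 1" "y < (1 - e) * l"
      using \<open>y < l\<close> l by (auto simp: e_def min_def field_simps)
    then show "\<forall>\<^sub>F n in sequentially. y < c n"
      using lower[of e] by (auto elim: eventually_mono)
  next
    fix y assume "l < y"
    with sum x_nonneg show "\<forall>\<^sub>F n in sequentially. c n < y"
      by (auto dest: order_tendstoD elim: eventually_elim2)
  qed
  have "(\<lambda>n. (c n + x n) - c n) \<longlonglongrightarrow> l - l"
    by (intro tendsto_diff sum c_lim)
  then show "x \<longlonglongrightarrow> 0" by simp
qed

lemma (in prob_space) AE_E_prob_one:
  assumes "AE x in M. P x"
  obtains S where "S \<in> sets M" "emeasure M S = 1" "\<And>x. x \<in> S \<Longrightarrow> P x"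
proof -
  from assms obtain N where "\<And>x. x \<in> space M - N \<Longrightarrow> P x" "N \<in> null_sets M"
    by (rule AE_E3) blast
  then show ?thesis
    by (intro that[of "space M - N"]) (auto simp: emeasure_Diff_null_set emeasure_space_1)
qed

section \<open>Counting coincidences\<close>

lemma Zw_diff:
  assumes "v \<le> u"
  shows "Zw \<omega> u - Zw \<omega> v = (\<Sum>i\<in>{v..<u}. \<omega> (int i))"
proof -
  have "{..<u} = {..<v} \<union> {v..<u}" using assms by auto
  then show ?thesis
    unfolding Zw_def by (simp add: sum.union_disjoint ivl_disj_int)
qed

lemma Vw_cong_window:
  assumes "\<And>i. a \<le> i \<Longrightarrow> i < b \<Longrightarrow> \<omega> (int i) = \<omega>' (int i)"
    and "I \<subseteq> {a..b}" "J \<subseteq> {a..b}"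
  shows "Vw \<omega> I J p = Vw \<omega>' I J p"
proof -
  have base: "Zw \<omega> x - Zw \<omega> a = Zw \<omega>' x - Zw \<omega>' a" if "x \<in> {a..b}" for x
    using that assms(1) by (simp add: Zw_diff)
  have "Zw \<omega> u - Zw \<omega> v = Zw \<omega>' u - Zw \<omega>' v" if "u \<in> {a..b}" "v \<in> {a..b}" for u v
  proof -
    have "Zw \<omega> u - Zw \<omega> v = (Zw \<omega> u - Zw \<omega> a) - (Zw \<omega> v - Zw \<omega> a)" by simp
    also have "\<dots> = (Zw \<omega>' u - Zw \<omega>' a) - (Zw \<omega>' v - Zw \<omega>' a)" using base that by simp
    finally show ?thesis by simp
  qed
  then show ?thesis
    unfolding Vw_def using assms(2,3) by (intro arg_cong[where f = card] Collect_cong) (auto simp: subset_iff)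
qed

definition walk_shift :: "nat \<Rightarrow> (int \<Rightarrow> 'a) \<Rightarrow> int \<Rightarrow> 'a" where
  "walk_shift c \<omega> = (\<lambda>i. \<omega> (i + int c))"

lemma Zw_walk_shift: "Zw (walk_shift c \<omega>) u = Zw \<omega> (u + c) - Zw \<omega> c"
proof -
  have "Zw (walk_shift c \<omega>) u = (\<Sum>i<u. \<omega> (int (i + c)))" unfolding Zw_def walk_shift_def by simp
  also have "\<dots> = (\<Sum>i\<in>{c..<u+c}. \<omega> (int i))"
    by (rule sum.reindex_bij_witness[of _ "\<lambda>i. i - c" "\<lambda>i. i + c"]) auto
  finally show ?thesis by (simp add: Zw_diff)
qed

lemma Vw_walk_shift: "Vw (walk_shift c \<omega>) I J p = Vw \<omega> ((\<lambda>x. x + c) ` I) ((\<lambda>x. x + c) ` J) p"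
proof -
  have "{(u, v). u \<in> (\<lambda>x. x + c) ` I \<and> v \<in> (\<lambda>x. x + c) ` J \<and> Zw \<omega> u - Zw \<omega> v = p}
     = map_prod (\<lambda>x. x + c) (\<lambda>x. x + c) ` {(u, v). u \<in> I \<and> v \<in> J \<and> Zw (walk_shift c \<omega>) u - Zw (walk_shift c \<omega>) v = p}"
    by (auto simp: Zw_walk_shift image_iff)
  then show ?thesis
    unfolding Vw_def by (simp add: card_image inj_on_def)
qed

lemma Vw_walk_shift_block: "Vw (walk_shift c \<omega>) {1..L} {1..L} p = Vw \<omega> {c+1..c+L} {c+1..c+L} p"
proof -
  have "(\<lambda>x. x + c) ` {1..L} = {c+1..c+L}"
    by (auto simp: image_iff intro!: bexI[where x = "_ - c"])
  then show ?thesis by (simp add: Vw_walk_shift add.commute)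
qed

lemma Vw_eq_card_filter: "Vw \<omega> I J p = card (Set.filter (\<lambda>(u, v). Zw \<omega> u - Zw \<omega> v = p) (I \<times> J))"
  unfolding Vw_def by (rule arg_cong[where f = card]) auto

lemma Vw_empty_left [simp]: "Vw \<omega> {} J p = 0"
  unfolding Vw_def by simp

lemma Vw_empty_right [simp]: "Vw \<omega> I {} p = 0"
  unfolding Vw_def by simp

lemma Vw_le_card:
  assumes "finite I" "finite J"
  shows "Vw \<omega> I J p \<le> card I * card J"
proof -
  have "Vw \<omega> I J p \<le> card (I \<times> J)"
    unfolding Vw_eq_card_filter using assms by (intro card_mono) auto
  then show ?thesis by (simp add: card_cartesian_product)
qed

lemma Vw_mono:
  assumes "I \<subseteq> I'" "J \<subseteq> J'" "finite I'" "finite J'"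
  shows "Vw \<omega> I J p \<le> Vw \<omega> I' J' p"
  unfolding Vw_eq_card_filter using assms by (intro card_mono) auto

lemma Vw_Un_left:
  assumes "I \<inter> I' = {}" "finite I" "finite I'" "finite J"
  shows "Vw \<omega> (I \<union> I') J p = Vw \<omega> I J p + Vw \<omega> I' J p"
proof -
  let ?F = "Set.filter (\<lambda>(u, v). Zw \<omega> u - Zw \<omega> v = p)"
  have "?F ((I \<union> I') \<times> J) = ?F (I \<times> J) \<union> ?F (I' \<times> J)" by auto
  then show ?thesis
    unfolding Vw_eq_card_filter using assms by (simp add: card_Un_disjoint disjoint_iff)
qed

lemma Vw_Un_right:
  assumes "J \<inter> J' = {}" "finite I" "finite J" "finite J'"
  shows "Vw \<omega> I (J \<union> J') p = Vw \<omega> I J p + Vw \<omega> I J' p"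
proof -
  let ?F = "Set.filter (\<lambda>(u, v). Zw \<omega> u - Zw \<omega> v = p)"
  have "?F (I \<times> (J \<union> J')) = ?F (I \<times> J) \<union> ?F (I \<times> J')" by auto
  then show ?thesis
    unfolding Vw_eq_card_filter using assms by (simp add: card_Un_disjoint disjoint_iff)
qed

lemma sum_Vw_disjoint_le:
  assumes "finite Q" "finite S" "\<And>j. j \<in> S \<Longrightarrow> B j \<subseteq> Q" "disjoint_family_on B S"
  shows "(\<Sum>j\<in>S. Vw \<omega> (B j) (B j) p) \<le> Vw \<omega> Q Q p"
proof -
  let ?F = "\<lambda>X. Set.filter (\<lambda>(u, v). Zw \<omega> u - Zw \<omega> v = p) (X \<times> X)"
  have fin: "finite (B j)" if "j \<in> S" for j
    by (rule finite_subset[OF assms(3)[OF that] assms(1)])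
  have "(\<Sum>j\<in>S. Vw \<omega> (B j) (B j) p) = card (\<Union>j\<in>S. ?F (B j))"
    unfolding Vw_eq_card_filter
  proof (rule card_UN_disjoint[symmetric])
    show "\<forall>j\<in>S. finite (?F (B j))"
      using fin by simp
    show "\<forall>i\<in>S. \<forall>j\<in>S. i \<noteq> j \<longrightarrow> ?F (B i) \<inter> ?F (B j) = {}"
    proof (intro ballI impI)
      fix i j assume "i \<in> S" "j \<in> S" "i \<noteq> j"
      then have "B i \<inter> B j = {}" using assms(4) by (simp add: disjoint_family_on_def)
      then show "?F (B i) \<inter> ?F (B j) = {}" by auto
    qed
  qed fact
  also have "\<dots> \<le> card (?F Q)"
  proof (rule card_mono)
    show "(\<Union>j\<in>S. ?F (B j)) \<subseteq> ?F Q" using assms(3) by fastforce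
  qed (use assms(1) in simp)
  finally show ?thesis unfolding Vw_eq_card_filter .
qed

lemma block_index:
  fixes a j L x :: nat
  assumes "a + j * L \<le> x" "x < a + j * L + L"
  shows "(x - a) div L = j"
  using assms by (intro div_nat_eqI) (auto simp: algebra_simps)

lemma disjoint_family_on_blocks:
  fixes a L :: nat
  shows "disjoint_family_on (\<lambda>j. {a + j * L..<a + j * L + L}) S"
proof -
  have "j = j'" if "x \<in> {a + j * L..<a + j * L + L}" "x \<in> {a + j' * L..<a + j' * L + L}" for x j j'
    using that by (metis atLeastLessThan_iff block_index)
  then show ?thesis unfolding disjoint_family_on_def by blast
qed

lemma Vw_split:
  assumes "1 \<le> m" "m \<le> n"
  shows "Vw \<omega> {1..n} {1..n} p = Vw \<omega> {1..<m} {1..<m} p + Vw \<omega> {m..n} {m..n} p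
           + (Vw \<omega> {1..<m} {m..n} p + Vw \<omega> {m..n} {1..<m} p)"
proof -
  have U: "{1..n} = {1..<m} \<union> {m..n}" and D: "{1..<m} \<inter> {m..n} = {}"
    using assms by auto
  have "Vw \<omega> ({1..<m} \<union> {m..n}) ({1..<m} \<union> {m..n}) p
      = Vw \<omega> {1..<m} ({1..<m} \<union> {m..n}) p + Vw \<omega> {m..n} ({1..<m} \<union> {m..n}) p"
    by (rule Vw_Un_left[OF D]) auto
  also have "\<dots> = Vw \<omega> {1..<m} {1..<m} p + Vw \<omega> {1..<m} {m..n} p
      + (Vw \<omega> {m..n} {1..<m} p + Vw \<omega> {m..n} {m..n} p)"
    by (subst (1 2) Vw_Un_right[OF D]) auto
  finally show ?thesis unfolding U by simp
qed

lemma Vw_cross_closed_le_half_open: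
  assumes "1 \<le> m"
  shows "Vw \<omega> {1..m} {m..n} p + Vw \<omega> {m..n} {1..m} p
           \<le> Vw \<omega> {1..<m} {m..n} p + Vw \<omega> {m..n} {1..<m} p + 2 * (n + 1)"
proof -
  have U: "{1..m} = {1..<m} \<union> {m}" and D: "{1..<m} \<inter> {m} = {}"
    using assms by auto
  have "Vw \<omega> {m} {m..n} p \<le> n + 1" "Vw \<omega> {m..n} {m} p \<le> n + 1"
    using Vw_le_card[of "{m}" "{m..n}" \<omega> p] Vw_le_card[of "{m..n}" "{m}" \<omega> p] by auto
  moreover have "Vw \<omega> {1..m} {m..n} p = Vw \<omega> {1..<m} {m..n} p + Vw \<omega> {m} {m..n} p"
    unfolding U by (rule Vw_Un_left[OF D]) auto
  moreover have "Vw \<omega> {m..n} {1..m} p = Vw \<omega> {m..n} {1..<m} p + Vw \<omega> {m..n} {m} p"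
    unfolding U by (rule Vw_Un_right[OF D]) auto
  ultimately show ?thesis by simp
qed

lemma measurable_count_space_binop:
  fixes f :: "'a \<Rightarrow> 'b::countable" and g :: "'a \<Rightarrow> 'c::countable"
  assumes f: "f \<in> M \<rightarrow>\<^sub>M count_space UNIV" and g: "g \<in> M \<rightarrow>\<^sub>M count_space UNIV"
  shows "(\<lambda>x. h (f x) (g x)) \<in> M \<rightarrow>\<^sub>M count_space UNIV"
proof -
  have "(\<lambda>x. h a (g x)) \<in> M \<rightarrow>\<^sub>M count_space UNIV" for a
    by (rule measurable_compose_countable[where f = "\<lambda>b x. h a b", OF _ g]) simp
  then show ?thesis
    by (rule measurable_compose_countable[where f = "\<lambda>a x. h a (g x)", OF _ f])
qed

lemma measurable_component_PiM_pmf: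
  "(\<lambda>\<omega>. \<omega> i) \<in> PiM I (\<lambda>_. measure_pmf \<mu>) \<rightarrow>\<^sub>M count_space UNIV"
proof (cases "i \<in> I")
  case True
  then show ?thesis
    using measurable_component_singleton[OF True, of "\<lambda>_. measure_pmf \<mu>"]
    by (simp add: measurable_cong_sets)
next
  case False
  then have "\<omega> i = undefined" if "\<omega> \<in> space (PiM I (\<lambda>_. measure_pmf \<mu>))" for \<omega>
    using that by (auto simp: space_PiM PiE_def extensional_def)
  then show ?thesis
    by (subst measurable_cong[where g = "\<lambda>_. undefined"]) auto
qed

lemma measurable_Zw: "(\<lambda>\<omega>. Zw \<omega> u) \<in> PiM I (\<lambda>_. measure_pmf \<mu>) \<rightarrow>\<^sub>M count_space UNIV"
proof (induction u)
  case 0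
  then show ?case by (simp add: Zw_def)
next
  case (Suc u)
  have "(\<lambda>\<omega>. Zw \<omega> u + \<omega> (int u)) \<in> PiM I (\<lambda>_. measure_pmf \<mu>) \<rightarrow>\<^sub>M count_space UNIV"
    by (rule measurable_count_space_binop[OF Suc measurable_component_PiM_pmf])
  then show ?case by (simp add: Zw_def)
qed

lemma borel_measurable_Vw:
  assumes "finite I" "finite J"
  shows "(\<lambda>\<omega>. real (Vw \<omega> I J p)) \<in> borel_measurable (PiM K (\<lambda>_. measure_pmf \<mu>))"
proof -
  let ?M = "PiM K (\<lambda>_. measure_pmf \<mu>)"
  have eq: "real (Vw \<omega> I J p) = (\<Sum>x\<in>I \<times> J. if Zw \<omega> (fst x) - Zw \<omega> (snd x) = p then 1 else 0)" for \<omega>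
    unfolding Vw_eq_card_filter using assms by (simp add: sum.If_cases case_prod_beta Int_def)
  have "(\<lambda>\<omega>. Zw \<omega> (fst x) - Zw \<omega> (snd x)) \<in> ?M \<rightarrow>\<^sub>M count_space UNIV" for x
    by (rule measurable_count_space_binop[OF measurable_Zw measurable_Zw])
  from measurable_sets[OF this, of "{p}"]
  have S: "{\<omega> \<in> space ?M. Zw \<omega> (fst x) - Zw \<omega> (snd x) = p} \<in> sets ?M" for x
    by (simp add: vimage_def Int_def conj_commute)
  show ?thesis
    unfolding eq by (intro borel_measurable_sum measurable_If S) auto
qed

lemma prob_space_walk_space: "prob_space (walk_space \<mu>)"
  unfolding walk_space_def by (intro prob_space_PiM prob_space_measure_pmf)

lemma measurable_walk_shift: "walk_shift c \<in> walk_space \<mu> \<rightarrow>\<^sub>M walk_space \<mu>"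
proof -
  have "(\<lambda>\<omega>. \<lambda>i\<in>UNIV. \<omega> (i + int c)) \<in> PiM UNIV (\<lambda>_::int. measure_pmf \<mu>) \<rightarrow>\<^sub>M PiM UNIV (\<lambda>_::int. measure_pmf \<mu>)"
    by (intro measurable_restrict measurable_component_singleton) auto
  then show ?thesis unfolding walk_space_def walk_shift_def by (simp add: restrict_UNIV)
qed

lemma distr_walk_shift: "distr (walk_space \<mu>) (walk_space \<mu>) (walk_shift c) = walk_space \<mu>"
proof -
  have "distr (PiM UNIV (\<lambda>_::int. measure_pmf \<mu>)) (PiM UNIV (\<lambda>i. (\<lambda>_::int. measure_pmf \<mu>) (i + int c)))
          (\<lambda>\<omega>. \<lambda>n\<in>UNIV. \<omega> (n + int c)) = PiM UNIV (\<lambda>i. (\<lambda>_::int. measure_pmf \<mu>) (i + int c))"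
    by (rule distr_PiM_reindex) (auto intro: prob_space_measure_pmf inj_onI)
  then show ?thesis unfolding walk_space_def walk_shift_def by (simp add: restrict_UNIV)
qed

lemma indep_vars_walk_components:
  "prob_space.indep_vars (walk_space \<mu>) (\<lambda>_. measure_pmf \<mu>) (\<lambda>i \<omega>. \<omega> i) UNIV"
proof -
  interpret prob_space "walk_space \<mu>" by (rule prob_space_walk_space)
  have "(\<lambda>\<omega>. \<omega> i) \<in> walk_space \<mu> \<rightarrow>\<^sub>M measure_pmf \<mu>" for i
    unfolding walk_space_def using measurable_component_PiM_pmf by simp
  moreover have "distr (walk_space \<mu>) (PiM UNIV (\<lambda>_. measure_pmf \<mu>)) (\<lambda>x. \<lambda>i\<in>UNIV. x i)
        = PiM UNIV (\<lambda>i. distr (walk_space \<mu>) (measure_pmf \<mu>) (\<lambda>x. x i))"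
  proof -
    have "distr (walk_space \<mu>) (measure_pmf \<mu>) (\<lambda>x. x i) = measure_pmf \<mu>" for i
      unfolding walk_space_def by (rule distr_PiM_component) (auto intro: prob_space_measure_pmf)
    then show ?thesis
      unfolding restrict_UNIV by (simp add: walk_space_def distr_id[unfolded id_def])
  qed
  ultimately show ?thesis
    by (subst indep_vars_iff_distr_eq_PiM') auto
qed

section \<open>Block statistics\<close>

text \<open>Truncation at \<open>1\<close> makes the statistic bounded, as Hoeffding's inequality requires, and only lowers it.\<close>

definition block_stat :: "real \<Rightarrow> int \<times> int \<Rightarrow> nat \<Rightarrow> (int \<Rightarrow> int \<times> int) \<Rightarrow> real" where
  "block_stat C0 p L \<omega> = min 1 (real (Vw \<omega> {1..L} {1..L} p) / (C0 * real L * ln (real L)))"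

lemma borel_measurable_block_stat:
  "block_stat C0 p L \<in> borel_measurable (PiM K (\<lambda>_. measure_pmf \<mu>))"
  unfolding block_stat_def[abs_def] by (intro borel_measurable_min borel_measurable_divide borel_measurable_Vw) auto

lemma block_stat_bounds:
  assumes "C0 > 0"
  shows "block_stat C0 p L \<omega> \<in> {0..1}"
  using assms ln_of_nat_nonneg[of L] unfolding block_stat_def by (auto intro!: divide_nonneg_nonneg)

lemma block_stat_le_Vw:
  assumes "C0 \<ge> 0"
  shows "C0 * real L * ln (real L) * block_stat C0 p L \<omega> \<le> real (Vw \<omega> {1..L} {1..L} p)"
proof (cases "C0 * real L * ln (real L) = 0")
  case False
  moreover have "C0 * real L * ln (real L) \<ge> 0"
    using assms ln_of_nat_nonneg[of L] by simp
  ultimately have "C0 * real L * ln (real L) > 0" by (metis less_eq_real_def)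
  then show ?thesis
    unfolding block_stat_def by (simp add: min_def field_simps)
qed auto

lemma block_stat_walk_shift_window:
  "block_stat C0 p L (walk_shift s \<omega>) = block_stat C0 p L (walk_shift s (restrict \<omega> (int ` {s..<s+L})))"
proof -
  have "Vw \<omega> {s+1..s+L} {s+1..s+L} p = Vw (restrict \<omega> (int ` {s..<s+L})) {s+1..s+L} {s+1..s+L} p"
    by (rule Vw_cong_window[of s "s+L"]) auto
  then show ?thesis unfolding block_stat_def Vw_walk_shift_block by simp
qed

lemma indep_vars_block_stats:
  "prob_space.indep_vars (walk_space \<mu>) (\<lambda>_. borel)
     (\<lambda>j \<omega>. block_stat C0 p L (walk_shift (a + j * L) \<omega>)) {..<K}"
proof -
  interpret prob_space "walk_space \<mu>" by (rule prob_space_walk_space)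
  define W where "W j = int ` {a + j * L..<a + j * L + L}" for j
  have "disjoint_family_on W {..<K}"
    using disjoint_family_on_blocks[of a L "{..<K}"]
    unfolding W_def disjoint_family_on_def image_Int[OF inj_of_nat, symmetric] by simp
  then have "indep_vars (\<lambda>j. PiM (W j) (\<lambda>_. measure_pmf \<mu>)) (\<lambda>j \<omega>. restrict \<omega> (W j)) {..<K}"
    using indep_vars_restrict[OF indep_vars_walk_components] by auto
  then have "indep_vars (\<lambda>_. borel)
      (\<lambda>j \<omega>. block_stat C0 p L (walk_shift (a + j * L) (restrict \<omega> (W j)))) {..<K}"
  proof (rule indep_vars_compose2)
    show "(\<lambda>r. block_stat C0 p L (walk_shift (a + j * L) r)) \<in> borel_measurable (PiM (W j) (\<lambda>_. measure_pmf \<mu>))" for j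
      unfolding block_stat_def Vw_walk_shift_block
      by (intro borel_measurable_min borel_measurable_divide borel_measurable_Vw) auto
  qed
  then show ?thesis
    by (subst indep_vars_cong[OF refl _ refl]) (auto simp: W_def block_stat_walk_shift_window[symmetric])
qed

lemma distr_block_stat_walk_shift:
  "distr (walk_space \<mu>) borel (\<lambda>\<omega>. block_stat C0 p L (walk_shift c \<omega>))
     = distr (walk_space \<mu>) borel (block_stat C0 p L)"
proof -
  have "block_stat C0 p L \<in> borel_measurable (walk_space \<mu>)"
    unfolding walk_space_def by (rule borel_measurable_block_stat)
  then have "distr (walk_space \<mu>) borel (block_stat C0 p L \<circ> walk_shift c)
      = distr (distr (walk_space \<mu>) (walk_space \<mu>) (walk_shift c)) borel (block_stat C0 p L)"
    by (intro distr_distr[symmetric] measurable_walk_shift)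
  then show ?thesis by (simp only: distr_walk_shift comp_def)
qed

lemma prob_block_average_le:
  assumes "C0 > 0" "K > 0" "\<epsilon> \<ge> 0"
  shows "measure (walk_space \<mu>) {\<omega> \<in> space (walk_space \<mu>).
            (\<Sum>j<K. block_stat C0 p L (walk_shift (a + j * L) \<omega>)) / real K
              \<le> prob_space.expectation (walk_space \<mu>) (block_stat C0 p L) - \<epsilon>}
         \<le> exp (- 2 * real K * \<epsilon>\<^sup>2)"
proof -
  interpret prob_space "walk_space \<mu>" by (rule prob_space_walk_space)
  interpret Hoeffding_ineq_iid "walk_space \<mu>" "{..<K}" "\<lambda>j \<omega>. block_stat C0 p L (walk_shift (a + j * L) \<omega>)"
    "block_stat C0 p L" 0 1 "expectation (block_stat C0 p L)"
  proof unfold_locales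
    show "finite {..<K}" by simp
    show "indep_vars (\<lambda>_. borel) (\<lambda>j \<omega>. block_stat C0 p L (walk_shift (a + j * L) \<omega>)) {..<K}"
      by (rule indep_vars_block_stats)
    show "distr (walk_space \<mu>) borel (\<lambda>\<omega>. block_stat C0 p L (walk_shift (a + j * L) \<omega>))
        = distr (walk_space \<mu>) borel (block_stat C0 p L)" for j
      by (rule distr_block_stat_walk_shift)
    show "random_variable borel (block_stat C0 p L)"
      unfolding walk_space_def by (simp add: borel_measurable_block_stat)
    show "AE \<omega> in walk_space \<mu>. block_stat C0 p L \<omega> \<in> {0..1}"
      using block_stat_bounds[OF assms(1)] by simp
  qed (rule reflexive)
  have "prob {\<omega> \<in> space (walk_space \<mu>). (\<Sum>j\<in>{..<K}. block_stat C0 p L (walk_shift (a + j * L) \<omega>)) / real (card {..<K})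
          \<le> expectation (block_stat C0 p L) - \<epsilon>}
     \<le> exp (- 2 * real (card {..<K}) * \<epsilon>\<^sup>2 / (1 - 0)\<^sup>2)"
    by (rule Hoeffding_ineq_le') (use assms in auto)
  then show ?thesis by simp
qed

lemma expectation_block_stat_tendsto:
  assumes C0: "C0 > 0"
    and full: "AE \<omega> in walk_space \<mu>. (\<lambda>n. real (Vw \<omega> {1..n} {1..n} p) / (C0 * real n * ln (real n))) \<longlonglongrightarrow> 1"
  shows "(\<lambda>L. prob_space.expectation (walk_space \<mu>) (block_stat C0 p L)) \<longlonglongrightarrow> 1"
proof -
  interpret prob_space "walk_space \<mu>" by (rule prob_space_walk_space)
  have "(\<lambda>L. expectation (block_stat C0 p L)) \<longlonglongrightarrow> expectation (\<lambda>_. 1)"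
  proof (rule integral_dominated_convergence[where w = "\<lambda>_. 1"])
    show "AE \<omega> in walk_space \<mu>. (\<lambda>L. block_stat C0 p L \<omega>) \<longlonglongrightarrow> 1"
      using full
    proof eventually_elim
      case (elim \<omega>)
      then have "(\<lambda>L. min 1 (real (Vw \<omega> {1..L} {1..L} p) / (C0 * real L * ln (real L)))) \<longlonglongrightarrow> min 1 1"
        by (intro tendsto_min tendsto_const)
      then show ?case by (simp add: block_stat_def)
    qed
    show "AE \<omega> in walk_space \<mu>. norm (block_stat C0 p L \<omega>) \<le> 1" for L
      using block_stat_bounds[OF C0] by simp
    show "integrable (walk_space \<mu>) (\<lambda>_. 1::real)" by simp
  qed (simp_all add: walk_space_def borel_measurable_block_stat)
  then show ?thesis by (simp add: prob_space)
qed

definition split_point :: "real \<Rightarrow> nat \<Rightarrow> nat" where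
  "split_point A n = nat \<lfloor>real n * A\<rfloor>"

lemma split_point_le: "0 \<le> A \<Longrightarrow> real (split_point A n) \<le> real n * A"
  unfolding split_point_def by (rule of_nat_floor) simp

lemma split_point_gt: "real n * A - 1 < real (split_point A n)"
  unfolding split_point_def by (rule nat_floor_gt)

lemma split_point_le_self:
  assumes "0 \<le> A" "A \<le> 1"
  shows "split_point A n \<le> n"
proof -
  have "real (split_point A n) \<le> real n"
    using split_point_le[OF assms(1), of n] assms mult_left_le[of A "real n"] by simp
  then show ?thesis by simp
qed

lemma split_point_mono: "A \<le> A' \<Longrightarrow> split_point A n \<le> split_point A' n"
  unfolding split_point_def by (intro nat_mono floor_mono mult_left_mono) auto

lemma split_point_eq_0: "A < 1 \<Longrightarrow> n \<le> 1 \<Longrightarrow> split_point A n = 0"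
  unfolding split_point_def by (cases n) auto

lemma split_point_pred_bounds:
  assumes "0 \<le> A"
  shows "real n * A - 2 \<le> real (split_point A n - 1)" "real (split_point A n - 1) \<le> real n * A"
  using split_point_gt[of n A] split_point_le[OF assms, of n] by (auto simp: of_nat_diff)

lemma eventually_split_point_between:
  assumes "0 < A" "A < 1"
  shows "\<forall>\<^sub>F n in sequentially. 1 \<le> split_point A n \<and> split_point A n \<le> n \<and> 2 \<le> n"
proof -
  have "\<forall>\<^sub>F n::nat in sequentially. 2 \<le> real n * A"
    using assms by real_asymp
  moreover have "\<forall>\<^sub>F n in sequentially. (2::nat) \<le> n"
    by (rule eventually_ge_at_top)
  ultimately show ?thesis
  proof eventually_elim
    case (elim n)
    then show ?case
      using split_point_gt[of n A] split_point_le_self[of A n] assms by auto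
  qed
qed

text \<open>
  With \<open>K \<approx> (ln n)\<^sup>2\<close> blocks, \<open>exp(-2 K e\<^sup>2)\<close> is summable in \<open>n\<close>, while blocks of length
  \<open>L \<approx> n / (ln n)\<^sup>2\<close> still satisfy \<open>K L ln L \<sim> (1 - A) n ln n\<close>.
\<close>

definition nblocks :: "nat \<Rightarrow> nat" where
  "nblocks n = (nat \<lfloor>ln (real n)\<rfloor>)\<^sup>2 + 1"

definition block_len :: "real \<Rightarrow> nat \<Rightarrow> nat" where
  "block_len A n = (n - split_point A n) div nblocks n"

lemma nblocks_pos: "0 < nblocks n"
  unfolding nblocks_def by simp

lemma nblocks_le: "real (nblocks n) \<le> (ln (real n))\<^sup>2 + 1"
proof -
  have "real (nat \<lfloor>ln (real n)\<rfloor>) \<le> ln (real n)"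
    by (rule of_nat_floor[OF ln_of_nat_nonneg])
  then have "(real (nat \<lfloor>ln (real n)\<rfloor>))\<^sup>2 \<le> (ln (real n))\<^sup>2"
    by (intro power_mono) auto
  then show ?thesis unfolding nblocks_def by simp
qed

lemma nblocks_ge: "(ln (real n) - 1)\<^sup>2 \<le> real (nblocks n)"
proof (cases "1 \<le> ln (real n)")
  case True
  then have "(ln (real n) - 1)\<^sup>2 \<le> (real (nat \<lfloor>ln (real n)\<rfloor>))\<^sup>2"
    using nat_floor_gt[of "ln (real n)"] by (intro power_mono) auto
  then show ?thesis unfolding nblocks_def by simp
next
  case False
  then have "(ln (real n) - 1)\<^sup>2 \<le> 1"
    using ln_of_nat_nonneg[of n] by (intro power_le_one_iff[THEN iffD2] abs_square_le_1[THEN iffD2]) auto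
  then show ?thesis unfolding nblocks_def by (simp add: add_increasing2)
qed

lemma summable_exp_nblocks:
  assumes "\<epsilon> > 0"
  shows "summable (\<lambda>n. exp (- 2 * real (nblocks n) * \<epsilon>\<^sup>2))"
proof (rule summable_comparison_test_ev)
  have "\<forall>\<^sub>F n in sequentially. exp (- 2 * (ln (real n) - 1)\<^sup>2 * \<epsilon>\<^sup>2) \<le> inverse (real n ^ 2)"
    using assms by real_asymp
  then show "\<forall>\<^sub>F n in sequentially. norm (exp (- 2 * real (nblocks n) * \<epsilon>\<^sup>2)) \<le> inverse (real n ^ 2)"
  proof eventually_elim
    case (elim n)
    have "exp (- 2 * real (nblocks n) * \<epsilon>\<^sup>2) \<le> exp (- 2 * (ln (real n) - 1)\<^sup>2 * \<epsilon>\<^sup>2)"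
      using nblocks_ge[of n] by (simp add: mult_right_mono)
    from order_trans[OF this elim] show ?case by simp
  qed
  show "summable (\<lambda>n. inverse (real n ^ 2))"
    by (rule inverse_power_summable) simp
qed

lemma split_point_add_blocks_le:
  assumes "0 \<le> A" "A \<le> 1"
  shows "split_point A n + nblocks n * block_len A n \<le> n"
proof -
  have "nblocks n * block_len A n \<le> n - split_point A n"
    unfolding block_len_def by (metis div_times_less_eq_dividend mult.commute)
  then show ?thesis using split_point_le_self[OF assms, of n] by simp
qed

lemma blocks_length_ge:
  assumes "0 \<le> A" "A \<le> 1"
  shows "(1 - A) * real n - (ln (real n))\<^sup>2 - 1 \<le> real (nblocks n * block_len A n)"
proof -
  let ?r = "n - split_point A n"
  have "?r = nblocks n * block_len A n + ?r mod nblocks n"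
    unfolding block_len_def by simp
  moreover have "?r mod nblocks n < nblocks n"
    using nblocks_pos by simp
  ultimately have "real ?r \<le> real (nblocks n * block_len A n) + real (nblocks n)"
    by linarith
  moreover have "(1 - A) * real n \<le> real ?r"
    using split_point_le[OF assms(1), of n] split_point_le_self[OF assms, of n]
    by (simp add: of_nat_diff algebra_simps)
  ultimately show ?thesis using nblocks_le[of n] by linarith
qed

lemma block_len_ge:
  assumes "0 \<le> A" "A \<le> 1"
  shows "(1 - A) * real n / ((ln (real n))\<^sup>2 + 1) - 1 \<le> real (block_len A n)"
proof -
  have pos: "0 < (ln (real n))\<^sup>2 + 1" by (rule add_nonneg_pos) simp_all
  have "(1 - A) * real n - ((ln (real n))\<^sup>2 + 1) \<le> ((ln (real n))\<^sup>2 + 1) * real (block_len A n)"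
    using blocks_length_ge[OF assms, of n] nblocks_le[of n]
      mult_right_mono[OF nblocks_le[of n], of "real (block_len A n)"] by simp
  then show ?thesis using pos by (simp add: field_simps)
qed

lemma filterlim_block_len:
  assumes "0 \<le> A" "A < 1"
  shows "filterlim (block_len A) at_top sequentially"
proof -
  have "filterlim (\<lambda>n::nat. (1 - A) * real n / ((ln (real n))\<^sup>2 + 1) - 1) at_top sequentially"
    using assms by real_asymp
  then have "filterlim (\<lambda>n. real (block_len A n)) at_top sequentially"
    by (rule filterlim_at_top_mono) (use block_len_ge assms in auto)
  then show ?thesis
    by (simp add: filterlim_sequentially_iff_filterlim_real)
qed

lemma eventually_blocks_x_ln_x_ge:
  assumes A: "0 \<le> A" "A < 1" and e: "0 < e"
  shows "\<forall>\<^sub>F n in sequentially.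
    (1 - e) * ((1 - A) * real n * ln (real n))
      \<le> real (nblocks n) * real (block_len A n) * ln (real (block_len A n))"
proof -
  define g where "g n = ((1 - A) * real n - (ln (real n))\<^sup>2 - 1)
      * ln ((1 - A) * real n / ((ln (real n))\<^sup>2 + 1) - 1)" for n :: nat
  have "(\<lambda>n. g n / ((1 - A) * real n * ln (real n))) \<longlonglongrightarrow> 1"
    unfolding g_def using A by real_asymp
  then have ratio: "\<forall>\<^sub>F n in sequentially. 1 - e < g n / ((1 - A) * real n * ln (real n))"
    using e by (intro order_tendstoD) auto
  have large: "\<forall>\<^sub>F n in sequentially. 1 \<le> (1 - A) * real n / ((ln (real n))\<^sup>2 + 1) - 1"
    "\<forall>\<^sub>F n in sequentially. 0 \<le> (1 - A) * real n - (ln (real n))\<^sup>2 - 1"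
    "\<forall>\<^sub>F n::nat in sequentially. 2 \<le> n"
    using A by real_asymp+
  show ?thesis using ratio large
  proof eventually_elim
    case (elim n)
    have "0 < (1 - A) * real n * ln (real n)" using elim A by simp
    with elim(1) have "(1 - e) * ((1 - A) * real n * ln (real n)) < g n"
      by (simp add: less_divide_eq)
    also have "g n \<le> real (nblocks n) * real (block_len A n) * ln (real (block_len A n))"
      unfolding g_def using elim(2,3) blocks_length_ge[of A n] block_len_ge[of A n] A
      by (intro mult_mono) auto
    finally show ?case by simp
  qed
qed

section \<open>Almost sure lower bound on the final segment\<close>

lemma Vw_ge_sum_block_stats:
  assumes "C0 \<ge> 0" "m + K * L \<le> n"
  shows "C0 * real L * ln (real L) * (\<Sum>j<K. block_stat C0 p L (walk_shift (m + j * L) \<omega>))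
           \<le> real (Vw \<omega> {m+1..n} {m+1..n} p)"
proof -
  let ?B = "\<lambda>j. {m + j * L + 1..m + j * L + L}"
  have "?B j = {m + 1 + j * L..<m + 1 + j * L + L}" for j by auto
  then have "disjoint_family_on ?B {..<K}"
    using disjoint_family_on_blocks[of "m + 1" L "{..<K}"] by simp
  moreover have "?B j \<subseteq> {m+1..n}" if "j \<in> {..<K}" for j
  proof -
    have "(j + 1) * L \<le> K * L" using that by (intro mult_le_mono1) simp
    then show ?thesis using assms(2) by auto
  qed
  ultimately have blocks: "(\<Sum>j<K. Vw \<omega> (?B j) (?B j) p) \<le> Vw \<omega> {m+1..n} {m+1..n} p"
    by (intro sum_Vw_disjoint_le) auto
  have "C0 * real L * ln (real L) * (\<Sum>j<K. block_stat C0 p L (walk_shift (m + j * L) \<omega>))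
      = (\<Sum>j<K. C0 * real L * ln (real L) * block_stat C0 p L (walk_shift (m + j * L) \<omega>))"
    by (simp add: sum_distrib_left)
  also have "\<dots> \<le> (\<Sum>j<K. real (Vw \<omega> (?B j) (?B j) p))"
  proof (rule sum_mono)
    fix j
    show "C0 * real L * ln (real L) * block_stat C0 p L (walk_shift (m + j * L) \<omega>)
        \<le> real (Vw \<omega> (?B j) (?B j) p)"
      using block_stat_le_Vw[OF assms(1), of L p "walk_shift (m + j * L) \<omega>"]
      unfolding Vw_walk_shift_block .
  qed
  also have "\<dots> \<le> real (Vw \<omega> {m+1..n} {m+1..n} p)"
    using blocks by (simp flip: of_nat_sum)
  finally show ?thesis .
qed

lemma AE_eventually_block_average_gt:
  fixes a L K :: "nat \<Rightarrow> nat"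
  assumes "C0 > 0" "\<epsilon> > 0" "\<And>n. 0 < K n"
    and "summable (\<lambda>n. exp (- 2 * real (K n) * \<epsilon>\<^sup>2))"
  shows "AE \<omega> in walk_space \<mu>. \<forall>\<^sub>F n in sequentially.
    prob_space.expectation (walk_space \<mu>) (block_stat C0 p (L n)) - \<epsilon>
      < (\<Sum>j<K n. block_stat C0 p (L n) (walk_shift (a n + j * L n) \<omega>)) / real (K n)"
proof -
  interpret prob_space "walk_space \<mu>" by (rule prob_space_walk_space)
  define S where "S n \<omega> = (\<Sum>j<K n. block_stat C0 p (L n) (walk_shift (a n + j * L n) \<omega>)) / real (K n)"
    for n \<omega>
  define B where "B n = {\<omega> \<in> space (walk_space \<mu>). S n \<omega> \<le> expectation (block_stat C0 p (L n)) - \<epsilon>}"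
    for n
  have "block_stat C0 p l \<in> borel_measurable (walk_space \<mu>)" for l
    unfolding walk_space_def by (rule borel_measurable_block_stat)
  then have "S n \<in> borel_measurable (walk_space \<mu>)" for n
    unfolding S_def[abs_def]
    by (intro borel_measurable_divide borel_measurable_sum borel_measurable_const
        measurable_compose[OF measurable_walk_shift]) auto
  then have B_sets: "B n \<in> sets (walk_space \<mu>)" for n
    unfolding B_def by (intro borel_measurable_le) auto
  have "measure (walk_space \<mu>) (B n) \<le> exp (- 2 * real (K n) * \<epsilon>\<^sup>2)" for n
    unfolding B_def S_def by (rule prob_block_average_le[OF assms(1) assms(3) less_imp_le[OF assms(2)]])
  then have "summable (\<lambda>n. measure (walk_space \<mu>) (B n))"
    by (intro summable_comparison_test[OF _ assms(4)]) auto
  then have "AE \<omega> in walk_space \<mu>. \<forall>\<^sub>F n in sequentially. \<omega> \<in> space (walk_space \<mu>) - B n"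
    by (intro borel_cantelli_AE1 B_sets) (simp_all add: emeasure_finite less_top[symmetric])
  then show ?thesis
  proof eventually_elim
    case (elim \<omega>)
    then show ?case by (rule eventually_mono) (auto simp: B_def S_def)
  qed
qed

definition tail_bound :: "real \<Rightarrow> (int \<Rightarrow> int \<times> int) \<Rightarrow> int \<times> int \<Rightarrow> real \<Rightarrow> real \<Rightarrow> bool" where
  "tail_bound C0 \<omega> p A e \<longleftrightarrow> (\<forall>\<^sub>F n in sequentially.
     (1 - e) * (C0 * (1 - A) * real n * ln (real n))
       \<le> real (Vw \<omega> {split_point A n..n} {split_point A n..n} p))"

lemma Vw_tail_ge_of_block_average:
  fixes K L m n :: nat
  assumes C0: "C0 > 0" and e: "0 < e" "e < 1" and K: "0 < K" and blocks: "m + K * L \<le> n"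
    and avg: "1 - e/2 < (\<Sum>j<K. block_stat C0 p L (walk_shift (m + j * L) \<omega>)) / real K"
    and X: "0 \<le> X" "(1 - e/2) * X \<le> real K * real L * ln (real L)"
  shows "(1 - e) * (C0 * X) \<le> real (Vw \<omega> {m..n} {m..n} p)"
proof -
  define \<Sigma> where "\<Sigma> = (\<Sum>j<K. block_stat C0 p L (walk_shift (m + j * L) \<omega>))"
  have \<Sigma>_ge: "(1 - e/2) * real K \<le> \<Sigma>"
    using avg K unfolding \<Sigma>_def by (simp add: less_divide_eq)
  have "1 - e \<le> (1 - e/2) * (1 - e/2)"
    by (simp add: algebra_simps)
  then have "(1 - e) * (C0 * X) \<le> ((1 - e/2) * (1 - e/2)) * (C0 * X)"
    using C0 X(1) by (intro mult_right_mono) auto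
  also have "\<dots> = C0 * ((1 - e/2) * ((1 - e/2) * X))"
    by (simp add: ac_simps)
  also have "\<dots> \<le> C0 * ((1 - e/2) * (real K * real L * ln (real L)))"
    using C0 e X(2) by (intro mult_left_mono) auto
  also have "\<dots> = C0 * real L * ln (real L) * ((1 - e/2) * real K)"
    by (simp add: ac_simps)
  also have "\<dots> \<le> C0 * real L * ln (real L) * \<Sigma>"
    using C0 ln_of_nat_nonneg[of L] by (intro mult_left_mono[OF \<Sigma>_ge]) simp
  also have "\<dots> \<le> real (Vw \<omega> {m+1..n} {m+1..n} p)"
    unfolding \<Sigma>_def using C0 blocks by (intro Vw_ge_sum_block_stats) auto
  also have "\<dots> \<le> real (Vw \<omega> {m..n} {m..n} p)"
    by (simp add: Vw_mono)
  finally show ?thesis .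
qed

lemma AE_tail_bound:
  assumes C0: "C0 > 0"
    and full: "AE \<omega> in walk_space \<mu>. (\<lambda>n. real (Vw \<omega> {1..n} {1..n} p) / (C0 * real n * ln (real n))) \<longlonglongrightarrow> 1"
    and A: "0 < A" "A < 1" and e: "0 < e" "e < 1"
  shows "AE \<omega> in walk_space \<mu>. tail_bound C0 \<omega> p A e"
proof -
  define E where "E L = prob_space.expectation (walk_space \<mu>) (block_stat C0 p L)" for L
  have "(\<lambda>n. E (block_len A n)) \<longlonglongrightarrow> 1"
    unfolding E_def using A
    by (intro filterlim_compose[OF expectation_block_stat_tendsto[OF C0 full] filterlim_block_len]) auto
  then have E_large: "\<forall>\<^sub>F n in sequentially. 1 - e/4 < E (block_len A n)"
    using e by (intro order_tendstoD) auto
  have avg: "AE \<omega> in walk_space \<mu>. \<forall>\<^sub>F n in sequentially. E (block_len A n) - e/4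
      < (\<Sum>j<nblocks n. block_stat C0 p (block_len A n) (walk_shift (split_point A n + j * block_len A n) \<omega>))
          / real (nblocks n)"
    unfolding E_def using C0 e nblocks_pos summable_exp_nblocks
    by (intro AE_eventually_block_average_gt) auto
  have size: "\<forall>\<^sub>F n in sequentially. (1 - e/2) * ((1 - A) * real n * ln (real n))
      \<le> real (nblocks n) * real (block_len A n) * ln (real (block_len A n))"
    using A e by (intro eventually_blocks_x_ln_x_ge) auto
  show ?thesis using avg
  proof eventually_elim
    case (elim \<omega>)
    show ?case unfolding tail_bound_def using elim E_large size
    proof eventually_elim
      case (elim n)
      have "(1 - e) * (C0 * ((1 - A) * real n * ln (real n)))
          \<le> real (Vw \<omega> {split_point A n..n} {split_point A n..n} p)"
        using C0 e nblocks_pos split_point_add_blocks_le[of A n] A elim ln_of_nat_nonneg[of n]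
        by (intro Vw_tail_ge_of_block_average) auto
      then show ?case by (simp add: ac_simps)
    qed
  qed
qed

lemma AE_tail_bounds_rational:
  assumes C0: "C0 > 0"
    and full: "AE \<omega> in walk_space \<mu>. \<forall>p. (\<lambda>n. real (Vw \<omega> {1..n} {1..n} p) / (C0 * real n * ln (real n))) \<longlonglongrightarrow> 1"
  shows "AE \<omega> in walk_space \<mu>. \<forall>p.
    \<forall>A\<in>\<rat>. \<forall>e\<in>\<rat>. 0 < A \<and> A < 1 \<and> 0 < e \<and> e < 1 \<longrightarrow> tail_bound C0 \<omega> p A e"
proof -
  have "AE \<omega> in walk_space \<mu>.
      \<forall>A\<in>\<rat>. \<forall>e\<in>\<rat>. 0 < A \<and> A < 1 \<and> 0 < e \<and> e < 1 \<longrightarrow> tail_bound C0 \<omega> p A e" for p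
  proof -
    have full_p: "AE \<omega> in walk_space \<mu>. (\<lambda>n. real (Vw \<omega> {1..n} {1..n} p) / (C0 * real n * ln (real n))) \<longlonglongrightarrow> 1"
      using full by eventually_elim blast
    show ?thesis
      by (intro AE_ball_countable' countable_rat AE_impI AE_tail_bound[OF C0 full_p]) auto
  qed
  then show ?thesis
    by (simp add: AE_all_countable)
qed

section \<open>From the lower bound to the limits\<close>

lemma tail_bound_mono:
  assumes tail: "tail_bound C0 \<omega> p q d" and C0: "C0 \<ge> 0" and "A \<le> q"
    and factor: "(1 - A) * (1 - e) \<le> (1 - d) * (1 - q)"
  shows "tail_bound C0 \<omega> p A e"
  using tail unfolding tail_bound_def
proof (rule eventually_mono)
  fix n
  assume tail_q: "(1 - d) * (C0 * (1 - q) * real n * ln (real n))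
    \<le> real (Vw \<omega> {split_point q n..n} {split_point q n..n} p)"
  have Z: "0 \<le> C0 * real n * ln (real n)"
    using C0 ln_of_nat_nonneg[of n] by simp
  have "Vw \<omega> {split_point q n..n} {split_point q n..n} p \<le> Vw \<omega> {split_point A n..n} {split_point A n..n} p"
    using split_point_mono[OF \<open>A \<le> q\<close>, of n] by (intro Vw_mono) auto
  then have tail_A: "(1 - d) * (C0 * (1 - q) * real n * ln (real n))
      \<le> real (Vw \<omega> {split_point A n..n} {split_point A n..n} p)"
    using tail_q of_nat_le_iff order_trans by blast
  have "(1 - e) * (C0 * (1 - A) * real n * ln (real n)) = ((1 - A) * (1 - e)) * (C0 * real n * ln (real n))"
    by (simp add: ac_simps)
  also have "\<dots> \<le> ((1 - d) * (1 - q)) * (C0 * real n * ln (real n))"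
    by (rule mult_right_mono[OF factor Z])
  also have "\<dots> = (1 - d) * (C0 * (1 - q) * real n * ln (real n))"
    by (simp add: ac_simps)
  finally show "(1 - e) * (C0 * (1 - A) * real n * ln (real n))
      \<le> real (Vw \<omega> {split_point A n..n} {split_point A n..n} p)"
    using tail_A by linarith
qed

lemma tail_bound_from_rationals:
  assumes C0: "C0 > 0" and A: "0 < A" "A < 1" and e: "0 < e" "e < 1"
    and rat: "\<forall>q\<in>\<rat>. \<forall>d\<in>\<rat>. 0 < q \<and> q < 1 \<and> 0 < d \<and> d < 1 \<longrightarrow> tail_bound C0 \<omega> p q d"
  shows "tail_bound C0 \<omega> p A e"
proof -
  obtain q where q: "q \<in> \<rat>" "A < q" "q < min 1 (A + e * (1 - A) / 2)"
    using Rats_dense_in_real[of A "min 1 (A + e * (1 - A) / 2)"] A e by auto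
  obtain d where d: "d \<in> \<rat>" "0 < d" "d < e / 2"
    using Rats_dense_in_real[of 0 "e / 2"] e by auto
  have "1 - e \<le> (1 - e/2) * (1 - e/2)"
    by (simp add: algebra_simps)
  then have "(1 - A) * (1 - e) \<le> (1 - A) * ((1 - e/2) * (1 - e/2))"
    using A by (intro mult_left_mono) auto
  also have "\<dots> = (1 - e/2) * ((1 - A) * (1 - e/2))" by simp
  also have "\<dots> \<le> (1 - d) * (1 - q)"
  proof (rule mult_mono)
    have "(1 - A) * (1 - e/2) = 1 - (A + e * (1 - A) / 2)"
      by (simp add: algebra_simps)
    then show "(1 - A) * (1 - e/2) \<le> 1 - q"
      using q(3) by linarith
  qed (use d A e in auto)
  finally have factor: "(1 - A) * (1 - e) \<le> (1 - d) * (1 - q)" .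
  have "tail_bound C0 \<omega> p q d"
    using rat q d A e by auto
  from tail_bound_mono[OF this _ _ factor] show ?thesis
    using C0 q(2) by simp
qed

lemma x_ln_x_split_point_ratio:
  assumes A: "0 < A"
  shows "(\<lambda>n. real (split_point A n - 1) * ln (real (split_point A n - 1)) / (real n * ln (real n))) \<longlonglongrightarrow> A"
proof (rule tendsto_sandwich)
  note bounds = split_point_pred_bounds[OF less_imp_le[OF A]]
  have "\<forall>\<^sub>F n::nat in sequentially. 1 \<le> real n * A - 2"
    using A by real_asymp
  moreover have "\<forall>\<^sub>F n::nat in sequentially. 0 < real n * ln (real n)"
    by real_asymp
  ultimately have large: "\<forall>\<^sub>F n in sequentially. 1 \<le> real n * A - 2 \<and> 0 < real n * ln (real n)"
    by (rule eventually_conj)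
  show "\<forall>\<^sub>F n in sequentially. (real n * A - 2) * ln (real n * A - 2) / (real n * ln (real n))
      \<le> real (split_point A n - 1) * ln (real (split_point A n - 1)) / (real n * ln (real n))"
    using large
  proof eventually_elim
    case (elim n)
    then show ?case
      using bounds[of n] by (intro divide_right_mono x_ln_x_mono) auto
  qed
  show "\<forall>\<^sub>F n in sequentially. real (split_point A n - 1) * ln (real (split_point A n - 1)) / (real n * ln (real n))
      \<le> (real n * A) * ln (real n * A) / (real n * ln (real n))"
    using large
  proof eventually_elim
    case (elim n)
    then show ?case
      using bounds[of n] by (intro divide_right_mono x_ln_x_mono) auto
  qed
  show "(\<lambda>n::nat. (real n * A - 2) * ln (real n * A - 2) / (real n * ln (real n))) \<longlonglongrightarrow> A"
    "(\<lambda>n::nat. (real n * A) * ln (real n * A) / (real n * ln (real n))) \<longlonglongrightarrow> A"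
    using A by real_asymp+
qed

lemma initial_segment_ratio_tendsto:
  fixes f :: "nat \<Rightarrow> real"
  assumes c: "c > 0" and A: "0 < A"
    and f: "(\<lambda>n. f n / (c * real n * ln (real n))) \<longlonglongrightarrow> 1"
  shows "(\<lambda>n. f (split_point A n - 1) / (c * real n * ln (real n))) \<longlonglongrightarrow> A"
proof -
  let ?m = "\<lambda>n. split_point A n - 1"
  have "filterlim (\<lambda>n::nat. real n * A - 2) at_top sequentially"
    using A by real_asymp
  then have "filterlim (\<lambda>n. real (?m n)) at_top sequentially"
    by (rule filterlim_at_top_mono) (use split_point_pred_bounds A in auto)
  then have "filterlim ?m at_top sequentially"
    by (simp add: filterlim_sequentially_iff_filterlim_real)
  from filterlim_compose[OF f this] x_ln_x_split_point_ratio[OF A]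
  have lim: "(\<lambda>n. f (?m n) / (c * real (?m n) * ln (real (?m n)))
      * (real (?m n) * ln (real (?m n)) / (real n * ln (real n)))) \<longlonglongrightarrow> 1 * A"
    by (intro tendsto_mult) auto
  have "\<forall>\<^sub>F n in sequentially. 2 \<le> ?m n"
    using \<open>filterlim ?m at_top sequentially\<close> unfolding filterlim_at_top by blast
  moreover have "\<forall>\<^sub>F n in sequentially. (2::nat) \<le> n"
    by (rule eventually_ge_at_top)
  ultimately have "\<forall>\<^sub>F n in sequentially. f (?m n) / (c * real (?m n) * ln (real (?m n)))
      * (real (?m n) * ln (real (?m n)) / (real n * ln (real n))) = f (?m n) / (c * real n * ln (real n))"
  proof eventually_elim
    case (elim n)
    define a b where "a = real (?m n) * ln (real (?m n))" and "b = real n * ln (real n)"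
    have "0 < a" "0 < b"
      unfolding a_def b_def using elim by auto
    then have "f (?m n) / (c * a) * (a / b) = f (?m n) / (c * b)"
      using c by (simp add: field_simps)
    then show ?case
      unfolding a_def b_def by (simp add: mult.assoc)
  qed
  with lim show ?thesis
    by (simp add: tendsto_cong)
qed

lemma tail_plus_cross_ratio_tendsto:
  assumes C0: "C0 > 0" and A: "0 < A" "A < 1"
    and full: "(\<lambda>n. real (Vw \<omega> {1..n} {1..n} p) / (C0 * real n * ln (real n))) \<longlonglongrightarrow> 1"
  defines "m \<equiv> split_point A"
  shows "(\<lambda>n. real (Vw \<omega> {m n..n} {m n..n} p) / (C0 * real n * ln (real n))
      + real (Vw \<omega> {1..<m n} {m n..n} p + Vw \<omega> {m n..n} {1..<m n} p) / (C0 * real n * ln (real n)))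
    \<longlonglongrightarrow> 1 - A"
proof -
  define N where "N n = C0 * real n * ln (real n)" for n
  have "{1..<k} = {1..k - 1}" for k :: nat
    by auto
  then have "(\<lambda>n. real (Vw \<omega> {1..n} {1..n} p) / N n - real (Vw \<omega> {1..<m n} {1..<m n} p) / N n)
      \<longlonglongrightarrow> 1 - A"
    unfolding N_def m_def
    using tendsto_diff[OF full initial_segment_ratio_tendsto[OF C0 A(1) full]] by simp
  moreover have "\<forall>\<^sub>F n in sequentially.
      real (Vw \<omega> {1..n} {1..n} p) / N n - real (Vw \<omega> {1..<m n} {1..<m n} p) / N n
    = real (Vw \<omega> {m n..n} {m n..n} p) / N n
      + real (Vw \<omega> {1..<m n} {m n..n} p + Vw \<omega> {m n..n} {1..<m n} p) / N n"
    using eventually_split_point_between[OF A]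
  proof eventually_elim
    case (elim n)
    then have "real (Vw \<omega> {1..n} {1..n} p) - real (Vw \<omega> {1..<m n} {1..<m n} p)
        = real (Vw \<omega> {m n..n} {m n..n} p) + real (Vw \<omega> {1..<m n} {m n..n} p + Vw \<omega> {m n..n} {1..<m n} p)"
      using Vw_split[of "m n" n \<omega> p] unfolding m_def by simp
    then show ?case
      by (metis diff_divide_distrib add_divide_distrib)
  qed
  ultimately show ?thesis
    unfolding N_def by (rule Lim_transform_eventually)
qed

lemma split_ratio_limits:
  assumes C0: "C0 > 0" and A: "0 < A" "A < 1"
    and full: "(\<lambda>n. real (Vw \<omega> {1..n} {1..n} p) / (C0 * real n * ln (real n))) \<longlonglongrightarrow> 1"
    and tail: "\<And>e. 0 < e \<Longrightarrow> e < 1 \<Longrightarrow> tail_bound C0 \<omega> p A e"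
  defines "m \<equiv> split_point A"
  shows "(\<lambda>n. real (Vw \<omega> {m n..n} {m n..n} p) / (C0 * real n * ln (real n))) \<longlonglongrightarrow> 1 - A"
    and "(\<lambda>n. real (Vw \<omega> {1..<m n} {m n..n} p + Vw \<omega> {m n..n} {1..<m n} p)
           / (C0 * real n * ln (real n))) \<longlonglongrightarrow> 0"
proof -
  define N where "N n = C0 * real n * ln (real n)" for n
  define c where "c n = real (Vw \<omega> {m n..n} {m n..n} p) / N n" for n
  define x where "x n = real (Vw \<omega> {1..<m n} {m n..n} p + Vw \<omega> {m n..n} {1..<m n} p) / N n" for n
  have sum: "(\<lambda>n. c n + x n) \<longlonglongrightarrow> 1 - A"
    unfolding c_def x_def N_def m_def by (rule tail_plus_cross_ratio_tendsto[OF C0 A full])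
  have lower: "\<forall>\<^sub>F n in sequentially. (1 - e) * (1 - A) \<le> c n" if "0 < e" "e < 1" for e
    using tail[OF that] eventually_split_point_between[OF A] unfolding tail_bound_def
  proof eventually_elim
    case (elim n)
    then have "0 < N n" unfolding N_def using C0 by simp
    with elim(1) show ?case
      unfolding c_def m_def N_def by (simp add: le_divide_eq ac_simps)
  qed
  have "0 \<le> N n" for n
    unfolding N_def using C0 ln_of_nat_nonneg[of n] by simp
  then have x_nonneg: "\<forall>\<^sub>F n in sequentially. 0 \<le> x n"
    unfolding x_def by simp
  have "c \<longlonglongrightarrow> 1 - A" and "x \<longlonglongrightarrow> 0"
    using tendsto_parts_of_sum[OF sum _ x_nonneg lower] A by auto
  then show "(\<lambda>n. real (Vw \<omega> {m n..n} {m n..n} p) / (C0 * real n * ln (real n))) \<longlonglongrightarrow> 1 - A"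
    and "(\<lambda>n. real (Vw \<omega> {1..<m n} {m n..n} p + Vw \<omega> {m n..n} {1..<m n} p)
           / (C0 * real n * ln (real n))) \<longlonglongrightarrow> 0"
    unfolding c_def x_def N_def by simp_all
qed

lemma closed_cross_ratio_tendsto:
  assumes C0: "C0 > 0" and A: "0 < A" "A < 1"
    and cross: "(\<lambda>n. real (Vw \<omega> {1..<split_point A n} {split_point A n..n} p
                  + Vw \<omega> {split_point A n..n} {1..<split_point A n} p) / (C0 * real n * ln (real n))) \<longlonglongrightarrow> 0"
  shows "(\<lambda>n. real (Vw \<omega> {1..split_point A n} {split_point A n..n} p
                  + Vw \<omega> {split_point A n..n} {1..split_point A n} p) / (real n * ln (real n))) \<longlonglongrightarrow> 0"
    (is "(\<lambda>n. ?T n / _) \<longlonglongrightarrow> 0")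
proof (rule tendsto_sandwich)
  define U where "U n = real (Vw \<omega> {1..<split_point A n} {split_point A n..n} p
    + Vw \<omega> {split_point A n..n} {1..<split_point A n} p)" for n
  show "\<forall>\<^sub>F n in sequentially. 0 \<le> ?T n / (real n * ln (real n))"
    by (simp add: ln_of_nat_nonneg)
  show "\<forall>\<^sub>F n in sequentially. ?T n / (real n * ln (real n))
      \<le> C0 * (U n / (C0 * real n * ln (real n))) + 2 * (real n + 1) / (real n * ln (real n))"
    using eventually_split_point_between[OF A]
  proof eventually_elim
    case (elim n)
    then have "?T n \<le> U n + 2 * (real n + 1)"
      using Vw_cross_closed_le_half_open[of "split_point A n" \<omega> n p] unfolding U_def
      by (simp only: of_nat_add[symmetric] of_nat_le_iff) simp
    moreover have "0 < real n * ln (real n)" using elim by simp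
    ultimately show ?case
      using C0 by (simp add: divide_right_mono add_divide_distrib[symmetric])
  qed
  have "(\<lambda>n. C0 * (U n / (C0 * real n * ln (real n)))) \<longlonglongrightarrow> C0 * 0"
    unfolding U_def by (intro tendsto_mult tendsto_const cross)
  moreover have "(\<lambda>n::nat. 2 * (real n + 1) / (real n * ln (real n))) \<longlonglongrightarrow> 0"
    by real_asymp
  ultimately show "(\<lambda>n. C0 * (U n / (C0 * real n * ln (real n))) + 2 * (real n + 1) / (real n * ln (real n)))
      \<longlonglongrightarrow> 0"
    using tendsto_add by fastforce
qed simp

lemma cross_term_factorization:
  assumes C0: "C0 > 0" and A: "0 < A" "A < 1"
    and cross: "(\<lambda>n. real (Vw \<omega> {1..<split_point A n} {split_point A n..n} p
                  + Vw \<omega> {split_point A n..n} {1..<split_point A n} p) / (C0 * real n * ln (real n))) \<longlonglongrightarrow> 0"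
  shows "\<exists>\<epsilon>::nat \<Rightarrow> real. \<epsilon> \<longlonglongrightarrow> 0 \<and>
    (\<forall>n. real (Vw \<omega> {1..split_point A n} {split_point A n..n} p + Vw \<omega> {split_point A n..n} {1..split_point A n} p)
          = \<epsilon> n * real n * ln (real n))"
proof -
  define T where "T n = real (Vw \<omega> {1..split_point A n} {split_point A n..n} p
    + Vw \<omega> {split_point A n..n} {1..split_point A n} p)" for n
  have "T n = T n / (real n * ln (real n)) * real n * ln (real n)" for n
  proof (cases "n \<le> 1")
    case True
    then show ?thesis using split_point_eq_0[of A n] A by (simp add: T_def)
  qed simp
  then show ?thesis
    using closed_cross_ratio_tendsto[OF C0 A cross] unfolding T_def by blast
qed

lemma split_interval_asymptotics:
  assumes C0: "C0 > 0" and A: "0 < A" "A < 1"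
    and full: "(\<lambda>n. real (Vw \<omega> {1..n} {1..n} p) / (C0 * real n * ln (real n))) \<longlonglongrightarrow> 1"
    and rat: "\<forall>q\<in>\<rat>. \<forall>d\<in>\<rat>. 0 < q \<and> q < 1 \<and> 0 < d \<and> d < 1 \<longrightarrow> tail_bound C0 \<omega> p q d"
  shows "(\<lambda>n. real (Vw \<omega> {split_point A n..n} {split_point A n..n} p)
            / (C0 * real n * (1 - A) * ln (real n))) \<longlonglongrightarrow> 1
    \<and> (\<exists>\<epsilon>::nat \<Rightarrow> real. \<epsilon> \<longlonglongrightarrow> 0 \<and>
         (\<forall>n. real (Vw \<omega> {1..split_point A n} {split_point A n..n} p
                    + Vw \<omega> {split_point A n..n} {1..split_point A n} p)
              = \<epsilon> n * real n * ln (real n)))"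
proof
  have "tail_bound C0 \<omega> p A e" if "0 < e" "e < 1" for e
    using tail_bound_from_rationals[OF C0 A that rat] .
  note limits = split_ratio_limits[OF C0 A full this]
  have "(\<lambda>n. real (Vw \<omega> {split_point A n..n} {split_point A n..n} p) / (C0 * real n * ln (real n)) / (1 - A))
      \<longlonglongrightarrow> (1 - A) / (1 - A)"
    using A by (intro tendsto_divide limits(1) tendsto_const) auto
  then show "(\<lambda>n. real (Vw \<omega> {split_point A n..n} {split_point A n..n} p)
      / (C0 * real n * (1 - A) * ln (real n))) \<longlonglongrightarrow> 1"
    using A by (simp add: ac_simps)
  show "\<exists>\<epsilon>::nat \<Rightarrow> real. \<epsilon> \<longlonglongrightarrow> 0 \<and>
      (\<forall>n. real (Vw \<omega> {1..split_point A n} {split_point A n..n} p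
                 + Vw \<omega> {split_point A n..n} {1..split_point A n} p)
           = \<epsilon> n * real n * ln (real n))"
    by (rule cross_term_factorization[OF C0 A limits(2)])
qed

theorem lemma1p5:
  fixes \<mu> :: "(int \<times> int) pmf" and C0 :: real
  assumes centered1: "measure_pmf.expectation \<mu> (\<lambda>z. real_of_int (fst z)) = 0"
    and centered2: "measure_pmf.expectation \<mu> (\<lambda>z. real_of_int (snd z)) = 0"
    and moment1: "integrable (measure_pmf \<mu>) (\<lambda>z. (real_of_int (fst z))\<^sup>2)"
    and moment2: "integrable (measure_pmf \<mu>) (\<lambda>z. (real_of_int (snd z))\<^sup>2)"
    and aperiodic: "int_group_gen (set_pmf \<mu>) = UNIV"
    and nonsingular:
      "measure_pmf.expectation \<mu> (\<lambda>z. (real_of_int (fst z))\<^sup>2)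
         * measure_pmf.expectation \<mu> (\<lambda>z. (real_of_int (snd z))\<^sup>2)
       - (measure_pmf.expectation \<mu> (\<lambda>z. real_of_int (fst z) * real_of_int (snd z)))\<^sup>2 \<noteq> 0"
    and C0_pos: "C0 > 0"
    and C0_def: "(\<lambda>n. integral\<^sup>L (walk_space \<mu>) (\<lambda>\<omega>. real (self_int \<omega> n)))
                   \<sim>[at_top] (\<lambda>n. C0 * real n * ln (real n))"
    and input_V: "AE \<omega> in walk_space \<mu>. \<forall>p.
        (\<lambda>n. real (Vw \<omega> {1..n} {1..n} p) / (C0 * real n * ln (real n))) \<longlonglongrightarrow> 1"
    and input_self: "AE \<omega> in walk_space \<mu>.
        (\<lambda>n. real (self_int \<omega> n) / (C0 * real n * ln (real n))) \<longlonglongrightarrow> 1"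
  shows "\<exists>\<Omega>h \<in> sets (walk_space \<mu>). emeasure (walk_space \<mu>) \<Omega>h = 1 \<and>
    (\<forall>\<omega> \<in> \<Omega>h. \<forall>p. \<forall>A::real. 0 < A \<and> A < 1 \<longrightarrow>
      (let B = 1 - A in
        ((\<lambda>n. real (Vw \<omega> {nat \<lfloor>real n * A\<rfloor>..n} {nat \<lfloor>real n * A\<rfloor>..n} p)
              / (C0 * real n * B * ln (real n))) \<longlonglongrightarrow> 1)
        \<and> (\<exists>\<epsilon>::nat \<Rightarrow> real. \<epsilon> \<longlonglongrightarrow> 0 \<and>
             (\<forall>n. real (Vw \<omega> {1..nat \<lfloor>real n * A\<rfloor>} {nat \<lfloor>real n * A\<rfloor>..n} p
                        + Vw \<omega> {nat \<lfloor>real n * A\<rfloor>..n} {1..nat \<lfloor>real n * A\<rfloor>} p)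
                  = \<epsilon> n * real n * ln (real n)))))"
proof -
  interpret prob_space "walk_space \<mu>" by (rule prob_space_walk_space)
  have "AE \<omega> in walk_space \<mu>. \<forall>p.
      (\<lambda>n. real (Vw \<omega> {1..n} {1..n} p) / (C0 * real n * ln (real n))) \<longlonglongrightarrow> 1
    \<and> (\<forall>A\<in>\<rat>. \<forall>e\<in>\<rat>. 0 < A \<and> A < 1 \<and> 0 < e \<and> e < 1 \<longrightarrow> tail_bound C0 \<omega> p A e)"
    (is "AE \<omega> in _. ?good \<omega>")
    using input_V AE_tail_bounds_rational[OF C0_pos input_V] by eventually_elim blast
  then obtain \<Omega> where \<Omega>: "\<Omega> \<in> sets (walk_space \<mu>)" "emeasure (walk_space \<mu>) \<Omega> = 1"
    and good: "\<And>\<omega>. \<omega> \<in> \<Omega> \<Longrightarrow> ?good \<omega>"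
    by (rule AE_E_prob_one) blast
  show ?thesis
    unfolding Let_def split_point_def[symmetric]
    by (intro bexI[OF _ \<Omega>(1)] conjI[OF \<Omega>(2)] ballI allI impI split_interval_asymptotics[OF C0_pos])
      (use good in auto)
qed

end
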